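(* Let $G$ and $H$ be finite simple connected graphs of order at least $3$. If the direct product $G \times H$ is well-dominated, then every minimum dominating set of $G$ and every minimum dominating set of $H$ is an independent set.
   Context: A graph is well-dominated if every minimal (with respect to inclusion) dominating set is a minimum dominating set. The direct product $G\times H$ has vertex set $V(G)\times V(H)$, with $(g_1,h_1)$ adjacent to $(g_2,h_2)$ iff $g_1g_2\in E(G)$ and $h_1h_2\in E(H)$. *)

theory Defs
  imports Main
begin

definition simple_graph :: "'a set \<Rightarrow> ('a \<Rightarrow> 'a \<Rightarrow> bool) \<Rightarrow> bool" where
  "simple_graph V E \<longleftrightarrow> finite V \<and> (\<forall>x y. E x y \<longrightarrow> x \<in> V \<and> y \<in> V)
     \<and> (\<forall>x y. E x y \<longrightarrow> E y x) \<and> (\<forall>x. \<not> E x x)"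

definition connected_graph :: "'a set \<Rightarrow> ('a \<Rightarrow> 'a \<Rightarrow> bool) \<Rightarrow> bool" where
  "connected_graph V E \<longleftrightarrow> V \<noteq> {} \<and>
     (\<forall>x\<in>V. \<forall>y\<in>V. (x, y) \<in> (Restr {(u, v). E u v} V)\<^sup>*)"

definition dominating_set :: "'a set \<Rightarrow> ('a \<Rightarrow> 'a \<Rightarrow> bool) \<Rightarrow> 'a set \<Rightarrow> bool" where
  "dominating_set V E D \<longleftrightarrow> D \<subseteq> V \<and> (\<forall>v\<in>V. v \<in> D \<or> (\<exists>u\<in>D. E u v))"

definition minimal_dominating_set :: "'a set \<Rightarrow> ('a \<Rightarrow> 'a \<Rightarrow> bool) \<Rightarrow> 'a set \<Rightarrow> bool" where
  "minimal_dominating_set V E D \<longleftrightarrow> dominating_set V E D \<and>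
     (\<forall>D'. D' \<subset> D \<longrightarrow> \<not> dominating_set V E D')"

definition minimum_dominating_set :: "'a set \<Rightarrow> ('a \<Rightarrow> 'a \<Rightarrow> bool) \<Rightarrow> 'a set \<Rightarrow> bool" where
  "minimum_dominating_set V E D \<longleftrightarrow> dominating_set V E D \<and>
     (\<forall>D'. dominating_set V E D' \<longrightarrow> card D \<le> card D')"

definition well_dominated :: "'a set \<Rightarrow> ('a \<Rightarrow> 'a \<Rightarrow> bool) \<Rightarrow> bool" where
  "well_dominated V E \<longleftrightarrow> (\<forall>D. minimal_dominating_set V E D \<longrightarrow> minimum_dominating_set V E D)"

definition independent_set :: "'a set \<Rightarrow> ('a \<Rightarrow> 'a \<Rightarrow> bool) \<Rightarrow> 'a set \<Rightarrow> bool" where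
  "independent_set V E S \<longleftrightarrow> S \<subseteq> V \<and> (\<forall>x\<in>S. \<forall>y\<in>S. \<not> E x y)"

definition direct_prod_vertices :: "'a set \<Rightarrow> 'b set \<Rightarrow> ('a \<times> 'b) set" where
  "direct_prod_vertices VG VH = VG \<times> VH"

definition direct_prod_edges ::
  "('a \<Rightarrow> 'a \<Rightarrow> bool) \<Rightarrow> ('b \<Rightarrow> 'b \<Rightarrow> bool) \<Rightarrow> 'a \<times> 'b \<Rightarrow> 'a \<times> 'b \<Rightarrow> bool" where
  "direct_prod_edges EG EH p q \<longleftrightarrow> EG (fst p) (fst q) \<and> EH (snd p) (snd q)"

end

theory Submission
  imports Defs
begin

text \<open>Suppose a minimum dominating set \<open>D\<close> of \<open>G\<close> contains an edge \<open>ab\<close>. Choose a vertex \<open>v\<close>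
of \<open>H\<close> that is not the only neighbour of any vertex (it exists because \<open>H\<close> is connected
with at least three vertices). Then \<open>D \<times> V(H) - {(a, v)}\<close> still dominates \<open>G \<times> H\<close>, so
\<open>\<gamma>(G \<times> H) < \<gamma>(G) |V(H)|\<close>. On the other hand a maximum independent set \<open>I\<close> of \<open>G\<close> dominates
\<open>G\<close>, hence \<open>\<gamma>(G) \<le> |I|\<close>, and \<open>I \<times> V(H)\<close> is independent in \<open>G \<times> H\<close>. A maximum independent
set of \<open>G \<times> H\<close> is a minimal dominating set of size at least \<open>|I| |V(H)| > \<gamma>(G \<times> H)\<close>, so
\<open>G \<times> H\<close> is not well-dominated.\<close>

definition maximum_independent_set :: "'a set \<Rightarrow> ('a \<Rightarrow> 'a \<Rightarrow> bool) \<Rightarrow> 'a set \<Rightarrow> bool" where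
  "maximum_independent_set V E I \<longleftrightarrow> independent_set V E I \<and>
     (\<forall>J. independent_set V E J \<longrightarrow> card J \<le> card I)"

lemma ex_maximum_independent_set:
  assumes "finite V"
  shows "\<exists>I. maximum_independent_set V E I"
proof -
  have "independent_set V E {}"
    by (simp add: independent_set_def)
  moreover have "\<forall>J. independent_set V E J \<longrightarrow> card J < Suc (card V)"
    using assms by (auto simp: independent_set_def le_imp_less_Suc card_mono)
  ultimately show ?thesis
    unfolding maximum_independent_set_def by (rule ex_has_greatest_nat)
qed

lemma maximum_independent_set_dominating:
  assumes "simple_graph V E" and max: "maximum_independent_set V E I"
  shows "dominating_set V E I"
proof -
  have "finite V" and sym: "\<And>x y. E x y \<Longrightarrow> E y x" and irrefl: "\<And>x. \<not> E x x"
    using assms(1) by (auto simp: simple_graph_def)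
  have ind: "independent_set V E I"
    using max by (simp add: maximum_independent_set_def)
  then have IV: "I \<subseteq> V"
    by (simp add: independent_set_def)
  have "\<exists>u\<in>I. E u v" if v: "v \<in> V" "v \<notin> I" for v
  proof (rule ccontr)
    assume "\<not> (\<exists>u\<in>I. E u v)"
    with ind v sym irrefl have "independent_set V E (insert v I)"
      unfolding independent_set_def by blast
    then have "card (insert v I) \<le> card I"
      using max by (simp add: maximum_independent_set_def)
    with finite_subset[OF IV \<open>finite V\<close>] v show False by simp
  qed
  with IV show ?thesis
    by (auto simp: dominating_set_def)
qed

lemma independent_dominating_set_minimal:
  assumes ind: "independent_set V E I" and dom: "dominating_set V E I"
  shows "minimal_dominating_set V E I"
  unfolding minimal_dominating_set_def
proof (intro conjI allI impI dom notI)
  fix D assume "D \<subset> I" and "dominating_set V E D"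
  obtain x where "x \<in> I" "x \<notin> D"
    using \<open>D \<subset> I\<close> by blast
  then obtain u where "u \<in> D" "E u x"
    using ind \<open>dominating_set V E D\<close> by (auto simp: dominating_set_def independent_set_def)
  with \<open>D \<subset> I\<close> \<open>x \<in> I\<close> ind show False
    by (auto simp: independent_set_def)
qed

lemma well_dominated_independent_le_dominating:
  assumes "simple_graph V E" and "well_dominated V E"
    and "independent_set V E J" and "dominating_set V E D"
  shows "card J \<le> card D"
proof -
  have "finite V"
    using assms(1) by (simp add: simple_graph_def)
  then obtain I where I: "maximum_independent_set V E I"
    using ex_maximum_independent_set by blast
  have "dominating_set V E I"
    using assms(1) I by (rule maximum_independent_set_dominating)
  with I have "minimal_dominating_set V E I"
    using independent_dominating_set_minimal unfolding maximum_independent_set_def by blast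
  then have "minimum_dominating_set V E I"
    using assms(2) by (simp add: well_dominated_def)
  then have "card I \<le> card D"
    using assms(4) by (simp add: minimum_dominating_set_def)
  moreover have "card J \<le> card I"
    using I assms(3) by (simp add: maximum_independent_set_def)
  ultimately show ?thesis by simp
qed

lemma dominating_set_inj_image_iff:
  assumes "inj f" and "\<And>x y. E' (f x) (f y) \<longleftrightarrow> E x y"
  shows "dominating_set (f ` V) E' (f ` D) \<longleftrightarrow> dominating_set V E D"
  using assms by (auto simp: dominating_set_def inj_image_subset_iff inj_image_mem_iff)

lemma minimal_dominating_set_inj_image_iff:
  assumes "inj f" and "\<And>x y. E' (f x) (f y) \<longleftrightarrow> E x y"
  shows "minimal_dominating_set (f ` V) E' (f ` D) \<longleftrightarrow> minimal_dominating_set V E D"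
proof -
  note dom_iff = dominating_set_inj_image_iff[where f = f and E' = E' and E = E and V = V, OF assms]
  have "(\<exists>D'. D' \<subset> f ` D \<and> dominating_set (f ` V) E' D') \<longleftrightarrow>
        (\<exists>D'. D' \<subset> D \<and> dominating_set V E D')"
  proof
    assume "\<exists>D'. D' \<subset> f ` D \<and> dominating_set (f ` V) E' D'"
    then obtain D' where "D' \<subset> f ` D" "dominating_set (f ` V) E' D'"
      by blast
    moreover obtain D'' where "D'' \<subseteq> D" "D' = f ` D''"
      using \<open>D' \<subset> f ` D\<close> by (meson psubset_imp_subset subset_image_iff)
    ultimately show "\<exists>D'. D' \<subset> D \<and> dominating_set V E D'"
      using dom_iff by blast
  next
    assume "\<exists>D'. D' \<subset> D \<and> dominating_set V E D'"
    then obtain D' where "D' \<subset> D" "dominating_set V E D'"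
      by blast
    moreover have "f ` D' \<subset> f ` D"
      using \<open>inj f\<close> \<open>D' \<subset> D\<close> by (simp add: image_strict_mono inj_on_subset)
    ultimately show "\<exists>D'. D' \<subset> f ` D \<and> dominating_set (f ` V) E' D'"
      using dom_iff by blast
  qed
  then show ?thesis
    unfolding minimal_dominating_set_def using dom_iff[of D] by blast
qed

lemma well_dominated_inj_image:
  assumes "inj f" and "\<And>x y. E' (f x) (f y) \<longleftrightarrow> E x y"
    and "well_dominated V E"
  shows "well_dominated (f ` V) E' "
  unfolding well_dominated_def
proof (intro allI impI)
  fix M' assume "minimal_dominating_set (f ` V) E' M'"
  moreover have "M' \<subseteq> f ` V"
    using calculation by (simp add: minimal_dominating_set_def dominating_set_def)
  ultimately obtain M where M: "M' = f ` M" and "minimal_dominating_set V E M"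
    using minimal_dominating_set_inj_image_iff[where f = f and E' = E' and E = E, OF assms(1,2)]
    by (metis subset_image_iff)
  then have min: "minimum_dominating_set V E M"
    using assms(3) by (simp add: well_dominated_def)
  have "card M' \<le> card D'" if "dominating_set (f ` V) E' D'" for D'
  proof -
    have "D' \<subseteq> f ` V"
      using that by (simp add: dominating_set_def)
    then obtain D where "D' = f ` D"
      by (auto simp: subset_image_iff)
    with that have "dominating_set V E D"
      using dominating_set_inj_image_iff[where f = f and E' = E' and E = E, OF assms(1,2)] by simp
    with min have "card M \<le> card D"
      by (simp add: minimum_dominating_set_def)
    with M \<open>D' = f ` D\<close> \<open>inj f\<close> show ?thesis
      by (simp add: card_image inj_on_subset)
  qed
  with \<open>minimal_dominating_set (f ` V) E' M'\<close> show "minimum_dominating_set (f ` V) E' M'"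
    by (simp add: minimal_dominating_set_def minimum_dominating_set_def)
qed

lemma well_dominated_direct_prod_commute:
  assumes "well_dominated (VG \<times> VH) (direct_prod_edges EG EH)"
  shows "well_dominated (VH \<times> VG) (direct_prod_edges EH EG)"
proof -
  have "direct_prod_edges EH EG (prod.swap p) (prod.swap q) \<longleftrightarrow> direct_prod_edges EG EH p q"
    for p q
    by (auto simp: direct_prod_edges_def)
  from well_dominated_inj_image[where f = prod.swap, OF bij_is_inj[OF bij_swap] this assms]
  show ?thesis
    by (simp add: product_swap)
qed

lemma simple_graph_direct_prod:
  assumes "simple_graph VG EG" and "simple_graph VH EH"
  shows "simple_graph (VG \<times> VH) (direct_prod_edges EG EH)"
  using assms unfolding simple_graph_def direct_prod_edges_def by auto

lemma independent_set_direct_prod: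
  assumes "independent_set VG EG I"
  shows "independent_set (VG \<times> VH) (direct_prod_edges EG EH) (I \<times> VH)"
  using assms by (auto simp: independent_set_def direct_prod_edges_def)

lemma connected_graph_edge_leaving:
  assumes "connected_graph V E" and "x \<in> V" "x \<in> C" and "w \<in> V" "w \<notin> C"
  shows "\<exists>x'\<in>C. \<exists>y. y \<notin> C \<and> E x' y"
proof -
  have "(x, w) \<in> (Restr {(u, v). E u v} V)\<^sup>*"
    using assms by (auto simp: connected_graph_def)
  then show ?thesis
    using \<open>x \<in> C\<close> \<open>w \<notin> C\<close> by (induction rule: rtrancl_induct) auto
qed

lemma ex_not_in_if_card_less:
  assumes "finite C" and "card C < card V"
  shows "\<exists>w\<in>V. w \<notin> C"
proof (rule ccontr)
  assume "\<not> (\<exists>w\<in>V. w \<notin> C)"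
  then have "V \<subseteq> C" by blast
  from card_mono[OF assms(1) this] assms(2) show False by simp
qed

lemma connected_graph_ex_neighbour:
  assumes "connected_graph V E" and "card V \<ge> 2" and "h \<in> V"
  shows "\<exists>y. E h y"
proof -
  obtain w where "w \<in> V" "w \<notin> {h}"
    using assms(2) ex_not_in_if_card_less[of "{h}" V] by auto
  then show ?thesis
    using connected_graph_edge_leaving[OF assms(1,3), of "{h}" w] by auto
qed

lemma ex_vertex_never_sole_neighbour:
  assumes sg: "simple_graph V E" and cn: "connected_graph V E" and "card V \<ge> 3"
  shows "\<exists>v\<in>V. \<forall>h\<in>V. \<exists>h'. E h h' \<and> h' \<noteq> v"
proof -
  have neighbour: "\<exists>y. E h y" if "h \<in> V" for h
    using connected_graph_ex_neighbour[OF cn _ that] assms(3) by simp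
  show ?thesis
  proof (cases "\<exists>l u. E l u \<and> (\<forall>y. E l y \<longrightarrow> y = u)")
    case True
    \<comment> \<open>a leaf \<open>l\<close> works: it can only be the sole neighbour of its own neighbour \<open>u\<close>, and \<open>u\<close>
      has a second neighbour because \<open>{l, u}\<close> is not all of \<open>V\<close>\<close>
    then obtain l u where "E l u" and leaf: "\<And>y. E l y \<Longrightarrow> y = u"
      by blast
    have sym: "\<And>x y. E x y \<Longrightarrow> E y x" and edge_in_V: "\<And>x y. E x y \<Longrightarrow> x \<in> V \<and> y \<in> V"
      using sg unfolding simple_graph_def by blast+
    with \<open>E l u\<close> have "l \<in> V" "u \<in> V"
      by blast+
    have "\<exists>h'. E h h' \<and> h' \<noteq> l" if hV: "h \<in> V" for h
    proof (cases "h = u")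
      case True
      have "card {l, u} \<le> 2"
        by (cases "l = u") simp_all
      with assms(3) have "card {l, u} < card V"
        by simp
      then obtain w where "w \<in> V" "w \<notin> {l, u}"
        using ex_not_in_if_card_less[of "{l, u}" V] by blast
      then obtain x y where "x \<in> {l, u}" "y \<notin> {l, u}" "E x y"
        using connected_graph_edge_leaving[OF cn \<open>u \<in> V\<close>, of "{l, u}" w] by blast
      with leaf True show ?thesis by blast
    next
      case False
      obtain y where "E h y"
        using neighbour[OF hV] by blast
      moreover have "y \<noteq> l"
      proof
        assume "y = l"
        with \<open>E h y\<close> sym have "E l h" by blast
        with leaf False show False by blast
      qed
      ultimately show ?thesis by blast
    qed
    with \<open>l \<in> V\<close> show ?thesis by blast
  next
    case False
    have "V \<noteq> {}"
      using assms(3) by auto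
    then obtain v where "v \<in> V"
      by blast
    moreover have "\<exists>h'. E h h' \<and> h' \<noteq> v" if "h \<in> V" for h
      using neighbour[OF that] False by blast
    ultimately show ?thesis by blast
  qed
qed

lemma dominating_set_direct_prod_remove:
  assumes sgG: "simple_graph VG EG" and sgH: "simple_graph VH EH"
    and D: "dominating_set VG EG D" and "a \<in> D" "b \<in> D" "EG a b"
    and v: "\<forall>h\<in>VH. \<exists>h'. EH h h' \<and> h' \<noteq> v"
  shows "dominating_set (VG \<times> VH) (direct_prod_edges EG EH) (D \<times> VH - {(a, v)})"
    (is "dominating_set _ ?E ?S")
  unfolding dominating_set_def
proof (intro conjI ballI)
  have symG: "\<And>x y. EG x y \<Longrightarrow> EG y x" and irreflG: "\<And>x. \<not> EG x x"
    using sgG unfolding simple_graph_def by blast+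
  have symH: "\<And>x y. EH x y \<Longrightarrow> EH y x" and edge_in_VH: "\<And>x y. EH x y \<Longrightarrow> y \<in> VH"
    using sgH unfolding simple_graph_def by blast+
  show "?S \<subseteq> VG \<times> VH"
    using D by (auto simp: dominating_set_def)
  fix p assume "p \<in> VG \<times> VH"
  then obtain g h where p: "p = (g, h)" and "g \<in> VG" "h \<in> VH"
    by blast
  obtain h' where h': "EH h h'" "h' \<noteq> v"
    using v \<open>h \<in> VH\<close> by blast
  consider (kept) "p \<in> ?S" | (removed) "p = (a, v)" | (outside) "g \<notin> D"
    using p \<open>h \<in> VH\<close> by blast
  then show "p \<in> ?S \<or> (\<exists>q\<in>?S. ?E q p)"
  proof cases
    case kept
    then show ?thesis by blast
  next
    case removed
    have "(b, h') \<in> ?S"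
      using \<open>b \<in> D\<close> \<open>EG a b\<close> irreflG edge_in_VH[OF h'(1)] by auto
    moreover have "?E (b, h') p"
      using removed p \<open>EG a b\<close> symG symH h'(1) by (simp add: direct_prod_edges_def)
    ultimately show ?thesis by blast
  next
    case outside
    then obtain u where "u \<in> D" "EG u g"
      using D \<open>g \<in> VG\<close> by (auto simp: dominating_set_def)
    then have "(u, h') \<in> ?S" and "?E (u, h') p"
      using p h' symH edge_in_VH[OF h'(1)] by (auto simp: direct_prod_edges_def)
    then show ?thesis by blast
  qed
qed

lemma well_dominated_direct_prod_minimum_dominating_independent:
  assumes sgG: "simple_graph VG EG" and sgH: "simple_graph VH EH"
    and "connected_graph VH EH" and "card VH \<ge> 3"
    and wd: "well_dominated (VG \<times> VH) (direct_prod_edges EG EH)"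
    and Dmin: "minimum_dominating_set VG EG D"
  shows "independent_set VG EG D"
proof (rule ccontr)
  assume "\<not> independent_set VG EG D"
  moreover have D: "dominating_set VG EG D"
    using Dmin by (simp add: minimum_dominating_set_def)
  ultimately obtain a b where "a \<in> D" "b \<in> D" "EG a b"
    by (auto simp: dominating_set_def independent_set_def)
  obtain v where "v \<in> VH" and v: "\<forall>h\<in>VH. \<exists>h'. EH h h' \<and> h' \<noteq> v"
    using ex_vertex_never_sole_neighbour[OF sgH assms(3,4)] by blast
  have "finite VG" "finite VH"
    using sgG sgH by (simp_all add: simple_graph_def)
  then have "finite D"
    using D finite_subset by (auto simp: dominating_set_def)
  obtain I where I: "maximum_independent_set VG EG I"
    using ex_maximum_independent_set[OF \<open>finite VG\<close>] by blast
  have "card D \<le> card I"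
    using Dmin maximum_independent_set_dominating[OF sgG I]
    by (simp add: minimum_dominating_set_def)
  have "independent_set (VG \<times> VH) (direct_prod_edges EG EH) (I \<times> VH)"
    using I by (simp add: independent_set_direct_prod maximum_independent_set_def)
  moreover have "dominating_set (VG \<times> VH) (direct_prod_edges EG EH) (D \<times> VH - {(a, v)})"
    using dominating_set_direct_prod_remove[OF sgG sgH D \<open>a \<in> D\<close> \<open>b \<in> D\<close> \<open>EG a b\<close> v] .
  ultimately have "card (I \<times> VH) \<le> card (D \<times> VH - {(a, v)})"
    by (rule well_dominated_independent_le_dominating[OF simple_graph_direct_prod[OF sgG sgH] wd])
  then have "card I * card VH \<le> card (D \<times> VH - {(a, v)})"
    by (simp add: card_cartesian_product)
  also have "\<dots> = card D * card VH - 1"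
    using \<open>a \<in> D\<close> \<open>v \<in> VH\<close> \<open>finite D\<close> \<open>finite VH\<close> by (simp add: card_cartesian_product)
  also have "\<dots> < card D * card VH"
    using \<open>a \<in> D\<close> \<open>v \<in> VH\<close> \<open>finite D\<close> \<open>finite VH\<close> card_gt_0_iff[of D] card_gt_0_iff[of VH]
    by fastforce
  also have "\<dots> \<le> card I * card VH"
    using \<open>card D \<le> card I\<close> by simp
  finally show False by simp
qed

theorem corollary12:
  fixes VG :: "'a set" and EG :: "'a \<Rightarrow> 'a \<Rightarrow> bool"
    and VH :: "'b set" and EH :: "'b \<Rightarrow> 'b \<Rightarrow> bool"
  assumes "simple_graph VG EG" and "connected_graph VG EG" and "card VG \<ge> 3"
    and "simple_graph VH EH" and "connected_graph VH EH" and "card VH \<ge> 3"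
    and "well_dominated (direct_prod_vertices VG VH) (direct_prod_edges EG EH)"
  shows "(\<forall>D. minimum_dominating_set VG EG D \<longrightarrow> independent_set VG EG D) \<and>
         (\<forall>D. minimum_dominating_set VH EH D \<longrightarrow> independent_set VH EH D)"
proof -
  have wd: "well_dominated (VG \<times> VH) (direct_prod_edges EG EH)"
    using assms(7) by (simp add: direct_prod_vertices_def)
  show ?thesis
    using well_dominated_direct_prod_minimum_dominating_independent[OF assms(1,4,5,6) wd]
      well_dominated_direct_prod_minimum_dominating_independent[OF assms(4,1,2,3)
        well_dominated_direct_prod_commute[OF wd]]
    by blast
qed

end
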